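(* Let $(\Xi,\mathcal G,\mathbb Q)$ be a probability space, $W^1=(W^1_t)_{0\le t\le T}$ and $W^2=(W^2_t)_{0\le t\le T}$ two independent identically distributed $\mathbb R^m$-valued processes with continuous trajectories and $\mathbb E_{\mathbb Q}[\sup_{t\le T}|W^1_t|^q]<\infty$, and let $(W^{i,j}_{s,t})_{0\le s\le t\le T}$, $i,j=1,2$, be four $\mathbb R^{m\times m}$-valued continuous two-parameter processes with $\mathbb E_{\mathbb Q}[\sup_{s\le t}|W^{i,j}_{s,t}|^q]<\infty$, such that $(W^1,W^{1,1})$ is independent of $W^2$ and, for $\mathbb Q$-a.e. $\xi$, $W^{i,j}_{r,t}(\xi)=W^{i,j}_{r,s}(\xi)+W^{i,j}_{s,t}(\xi)+W^i_{r,s}(\xi)\otimes W^j_{s,t}(\xi)$ for all $i,j\in\{1,2\}$ and $0\le r\le s\le t\le T$. For $i=1,2$ and $n\ge0$ let $W^{i,n}$ be the linear interpolation of $W^i$ at the dyadic points $t^k_n=kT/2^n$: $$W^{i,n}_t(\xi)=\sum_{k=0}^{2^n-1}\Big(W^i_{t^k_n}(\xi)+W^i_{t^k_n,t^{k+1}_n}(\xi)\frac{2^n(t-t^k_n)}{T}\Big)\mathbf 1_{[t^k_n,t^{k+1}_n)}(t).$$ If for $\mathbb Q$-a.e. $\xi\in\Xi$, for all $(s,t)\in\mathcal S_2^T$, $$W^{2,1}_{s,t}(\xi)=\lim_{n\to\infty}\int_s^t\big(W^{2,n}_r(\xi)-W^{2,n}_s(\xi)\big)\otimes dW^{1,n}_r(\xi),$$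 then there exists a measurable function $\mathcal I:C([0,T];\mathbb R^m)^2\to C(\mathcal S_2^T;\mathbb R^m\otimes\mathbb R^m)$ such that $\mathbb Q\big(\{\xi\in\Xi:W^{2,1}(\xi)=\mathcal I(W^2(\xi),W^1(\xi))\}\big)=1$.
   Context: $T>0$, $m\ge1$, $q\ge 1$ fixed; $\mathcal S_2^T=\{(s,t)\in[0,T]^2:s\le t\}$; for a path $f$, $f_{s,t}=f_t-f_s$. The integral in the hypothesis is a Riemann–Stieltjes integral against the piecewise linear path $W^{1,n}$. *)

theory Defs
  imports "HOL-Probability.Probability"
begin

definition simplex2 :: "real \<Rightarrow> (real \<times> real) set" where
  "simplex2 T = {(s,t). 0 \<le> s \<and> s \<le> t \<and> t \<le> T}"

definition outer :: "real^'m \<Rightarrow> real^'m \<Rightarrow> real^'m^'m" where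
  "outer a b = (\<chi> i. \<chi> j. a $ i * b $ j)"

definition dyadic_pt :: "real \<Rightarrow> nat \<Rightarrow> nat \<Rightarrow> real" where
  "dyadic_pt T n k = real k * T / 2 ^ n"

definition dyadic_interp :: "real \<Rightarrow> nat \<Rightarrow> (real \<Rightarrow> real^'m) \<Rightarrow> real \<Rightarrow> real^'m" where
  "dyadic_interp T n f t =
     (\<Sum>k<2^n. indicator {dyadic_pt T n k ..< dyadic_pt T n (Suc k)} t *\<^sub>R
        (f (dyadic_pt T n k) + ((2 ^ n * (t - dyadic_pt T n k)) / T) *\<^sub>R
            (f (dyadic_pt T n (Suc k)) - f (dyadic_pt T n k))))"

definition dyadic_interp_deriv :: "real \<Rightarrow> nat \<Rightarrow> (real \<Rightarrow> real^'m) \<Rightarrow> real \<Rightarrow> real^'m" where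
  "dyadic_interp_deriv T n f t =
     (\<Sum>k<2^n. indicator {dyadic_pt T n k ..< dyadic_pt T n (Suc k)} t *\<^sub>R
        ((2 ^ n / T) *\<^sub>R (f (dyadic_pt T n (Suc k)) - f (dyadic_pt T n k))))"

text \<open>The Riemann-Stieltjes integral  int_s^t (g^n_r - g^n_s) (x) d f^n_r  against the
  piecewise linear (absolutely continuous) path f^n, written as an integral against its derivative.\<close>
definition dyadic_rs_integral ::
  "real \<Rightarrow> nat \<Rightarrow> (real \<Rightarrow> real^'m) \<Rightarrow> (real \<Rightarrow> real^'m) \<Rightarrow> real \<Rightarrow> real \<Rightarrow> real^'m^'m" where
  "dyadic_rs_integral T n g f s t =
     integral {s..t} (\<lambda>r. outer (dyadic_interp T n g r - dyadic_interp T n g s)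
                                 (dyadic_interp_deriv T n f r))"

text \<open>Measurable space C([0,T]; R^m) (cylinder sigma-algebra = Borel sigma-algebra of sup norm).\<close>
definition cpaths :: "real \<Rightarrow> (real \<Rightarrow> real^'m) measure" where
  "cpaths T = restrict_space (Pi\<^sub>M {0..T} (\<lambda>_. borel)) {f. continuous_on {0..T} f}"

definition csimplex_paths :: "real \<Rightarrow> (real \<times> real \<Rightarrow> real^'m^'m) measure" where
  "csimplex_paths T = restrict_space (Pi\<^sub>M (simplex2 T) (\<lambda>_. borel)) {f. continuous_on (simplex2 T) f}"

definition events_gen :: "'a measure \<Rightarrow> 'b measure \<Rightarrow> ('a \<Rightarrow> 'b) \<Rightarrow> 'a set set" where
  "events_gen Q M X = {X -` S \<inter> space Q | S. S \<in> sets M}"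

end

theory Submission
  imports Defs
begin

(* For fixed (s,t), the dyadic Riemann-Stieltjes integral is a
   Lebesgue integral of a bounded, jointly measurable integrand, hence a measurable functional of
   the two paths, and so is its limit L(s,t). On the countable dense set of dyadic points of the
   simplex, uniform continuity of L is a countable condition, hence measurable; where it holds, L
   is extended continuously to the simplex, elsewhere the map is 0. Almost surely L(s,t) is the
   continuous W^{2,1}(s,t), which the extension therefore reproduces; the event of equality is
   measurable because two continuous functions agree as soon as they agree on the dense set. *)

definition dense_approx :: "'a::first_countable_topology set \<Rightarrow> 'a \<Rightarrow> nat \<Rightarrow> 'a" where
  "dense_approx D x = (SOME a. (\<forall>k. a k \<in> D) \<and> a \<longlonglongrightarrow> x)"

lemma dense_approx:
  assumes "x \<in> closure D"
  shows "dense_approx D x k \<in> D" and "dense_approx D x \<longlonglongrightarrow> x"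
proof -
  have "\<exists>a. (\<forall>k. a k \<in> D) \<and> a \<longlonglongrightarrow> x"
    using assms by (simp add: closure_sequential)
  from someI_ex[OF this] show "dense_approx D x k \<in> D" "dense_approx D x \<longlonglongrightarrow> x"
    unfolding dense_approx_def by auto
qed

text \<open>Defined along fixed approximating sequences, rather than by choosing an extension, so that it
  depends measurably on \<open>f\<close>; \<open>0\<close> is a junk value for \<open>f\<close> not uniformly continuous on \<open>D\<close>.\<close>
definition dense_extension :: "'a::metric_space set \<Rightarrow> ('a \<Rightarrow> 'b::{metric_space,zero}) \<Rightarrow> 'a \<Rightarrow> 'b" where
  "dense_extension D f x =
     (if uniformly_continuous_on D f then lim (\<lambda>k. f (dense_approx D x k)) else 0)"

lemma dense_extension_eq:
  assumes "uniformly_continuous_on D f" and g: "continuous_on (closure D) g"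
    and fg: "\<And>p. p \<in> D \<Longrightarrow> f p = g p" and x: "x \<in> closure D"
  shows "dense_extension D f x = g x"
proof -
  have "(\<lambda>k. g (dense_approx D x k)) \<longlonglongrightarrow> g x"
    using dense_approx[OF x] closure_subset
    by (intro continuous_on_tendsto_compose[OF g _ x] always_eventually) blast+
  moreover have "f (dense_approx D x k) = g (dense_approx D x k)" for k
    using fg dense_approx(1)[OF x] .
  ultimately have "(\<lambda>k. f (dense_approx D x k)) \<longlonglongrightarrow> g x"
    by simp
  then show ?thesis
    using assms(1) unfolding dense_extension_def by (simp add: limI)
qed

lemma dense_extension_eq_compact:
  assumes "compact (closure D)" "continuous_on (closure D) g"
    and "\<And>p. p \<in> D \<Longrightarrow> f p = g p" and "x \<in> closure D"
  shows "dense_extension D f x = g x"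
proof (rule dense_extension_eq[OF _ assms(2-4)])
  have "uniformly_continuous_on (closure D) g"
    using compact_uniformly_continuous[OF assms(2,1)] .
  then show "uniformly_continuous_on D f"
    using assms(3) closure_subset unfolding uniformly_continuous_on_def by (metis subsetD)
qed

lemma continuous_on_dense_extension:
  fixes f :: "'a::metric_space \<Rightarrow> 'b::{complete_space,zero}"
  shows "continuous_on (closure D) (dense_extension D f)"
proof (cases "uniformly_continuous_on D f")
  case True
  then obtain g where g: "uniformly_continuous_on (closure D) g" "\<And>x. x \<in> D \<Longrightarrow> f x = g x"
    using uniformly_continuous_on_extension_on_closure by metis
  have "continuous_on (closure D) g"
    using g(1) by (rule uniformly_continuous_imp_continuous)
  moreover have "g x = dense_extension D f x" if "x \<in> closure D" for x
    using dense_extension_eq[OF True \<open>continuous_on _ g\<close> g(2) that] by simp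
  ultimately show ?thesis
    by (rule continuous_on_eq)
next
  case False
  then show ?thesis
    by (simp add: dense_extension_def)
qed

lemma uniformly_continuous_on_iff_nat:
  "uniformly_continuous_on D f \<longleftrightarrow>
     (\<forall>e::nat. \<exists>d::nat. \<forall>p\<in>D. \<forall>p'\<in>D. dist p' p < 1 / Suc d \<longrightarrow> dist (f p') (f p) < 1 / Suc e)"
  unfolding uniformly_continuous_on_def
proof (intro iffI allI impI)
  fix e :: nat
  assume uc: "\<forall>\<epsilon>>0. \<exists>\<delta>>0. \<forall>p\<in>D. \<forall>p'\<in>D. dist p' p < \<delta> \<longrightarrow> dist (f p') (f p) < \<epsilon>"
  have "1 / Suc e > 0"
    by simp
  with uc obtain \<delta> where "\<delta> > 0" and \<delta>: "\<forall>p\<in>D. \<forall>p'\<in>D. dist p' p < \<delta> \<longrightarrow> dist (f p') (f p) < 1 / Suc e"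
    by blast
  obtain d where "1 / Suc d < \<delta>"
    using \<open>\<delta> > 0\<close> by (rule nat_approx_posE)
  with \<delta> show "\<exists>d::nat. \<forall>p\<in>D. \<forall>p'\<in>D. dist p' p < 1 / Suc d \<longrightarrow> dist (f p') (f p) < 1 / Suc e"
    by (intro exI[of _ d]) auto
next
  fix \<epsilon> :: real
  assume nat: "\<forall>e::nat. \<exists>d::nat. \<forall>p\<in>D. \<forall>p'\<in>D. dist p' p < 1 / Suc d \<longrightarrow> dist (f p') (f p) < 1 / Suc e"
    and "\<epsilon> > 0"
  obtain e where e: "1 / Suc e < \<epsilon>"
    using \<open>\<epsilon> > 0\<close> by (rule nat_approx_posE)
  obtain d where d: "\<forall>p\<in>D. \<forall>p'\<in>D. dist p' p < 1 / Suc d \<longrightarrow> dist (f p') (f p) < 1 / Suc e"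
    using nat by blast
  show "\<exists>\<delta>>0. \<forall>p\<in>D. \<forall>p'\<in>D. dist p' p < \<delta> \<longrightarrow> dist (f p') (f p) < \<epsilon>"
  proof (intro exI[of _ "1 / Suc d"] conjI ballI impI)
    fix p p' assume "p \<in> D" "p' \<in> D" "dist p' p < 1 / Suc d"
    with d e show "dist (f p') (f p) < \<epsilon>"
      by force
  qed simp
qed

lemma pred_countable_Ball:
  assumes "countable D" and "\<And>p. p \<in> D \<Longrightarrow> Measurable.pred M (P p)"
  shows "Measurable.pred M (\<lambda>x. \<forall>p\<in>D. P p x)"
proof (cases "D = {}")
  case False
  then have "Measurable.pred M (\<lambda>x. \<forall>p\<in>range (from_nat_into D). P p x)"
    using assms(2) from_nat_into[OF False] by simp
  then show ?thesis
    using range_from_nat_into[OF False assms(1)] by simp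
qed simp

lemma pred_uniformly_continuous_on:
  fixes F :: "'a \<Rightarrow> 'b::metric_space \<Rightarrow> 'c::{metric_space,second_countable_topology}"
  assumes "countable D" and F: "\<And>p. p \<in> D \<Longrightarrow> (\<lambda>x. F x p) \<in> borel_measurable M"
  shows "Measurable.pred M (\<lambda>x. uniformly_continuous_on D (F x))"
proof -
  have "Measurable.pred M (\<lambda>x. dist p' p < c \<longrightarrow> dist (F x p') (F x p) < c')"
    if "p \<in> D" "p' \<in> D" for p p' and c c' :: real
    using F[OF that(1)] F[OF that(2)] by measurable
  then show ?thesis
    unfolding uniformly_continuous_on_iff_nat
    by (intro pred_intros_countable pred_countable_Ball[OF assms(1)])
qed

lemma borel_measurable_dense_extension:
  fixes F :: "'c \<Rightarrow> 'a::metric_space \<Rightarrow> 'b::{banach,second_countable_topology}"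
  assumes "countable D" and "\<And>p. p \<in> D \<Longrightarrow> (\<lambda>x. F x p) \<in> borel_measurable M"
    and x: "x \<in> closure D"
  shows "(\<lambda>\<omega>. dense_extension D (F \<omega>) x) \<in> borel_measurable M"
proof -
  have [measurable]: "Measurable.pred M (\<lambda>\<omega>. uniformly_continuous_on D (F \<omega>))"
    using pred_uniformly_continuous_on[OF assms(1,2)] .
  have [measurable]: "(\<lambda>\<omega>. F \<omega> (dense_approx D x k)) \<in> borel_measurable M" for k
    using assms(2) dense_approx(1)[OF x] .
  show ?thesis
    unfolding dense_extension_def by measurable
qed

lemma sets_Collect_eq_on_closure:
  fixes F G :: "'a \<Rightarrow> 'b::metric_space \<Rightarrow> 'c::{metric_space,second_countable_topology}"
  assumes "countable D"
    and F: "F \<in> M \<rightarrow>\<^sub>M Pi\<^sub>M (closure D) (\<lambda>_. borel)" and G: "G \<in> M \<rightarrow>\<^sub>M Pi\<^sub>M (closure D) (\<lambda>_. borel)"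
    and cont: "\<And>x. x \<in> space M \<Longrightarrow> continuous_on (closure D) (F x) \<and> continuous_on (closure D) (G x)"
  shows "{x \<in> space M. F x = G x} \<in> sets M"
proof -
  have "F x = G x" if x: "x \<in> space M" and eq: "\<forall>p\<in>D. F x p = G x p" for x
  proof (rule extensionalityI)
    show "F x \<in> extensional (closure D)" "G x \<in> extensional (closure D)"
      using measurable_space[OF F x] measurable_space[OF G x] by (simp_all add: space_PiM PiE_def)
    fix p assume p: "p \<in> closure D"
    have dist: "continuous_on (closure D) (\<lambda>p. dist (F x p) (G x p))"
      using cont[OF x] by (intro continuous_on_dist) auto
    have "dist (F x p) (G x p) = 0"
      by (rule continuous_constant_on_closure[OF dist _ p]) (simp add: eq)
    then show "F x p = G x p"
      by simp
  qed
  then have "{x \<in> space M. F x = G x} = {x \<in> space M. \<forall>p\<in>D. F x p = G x p}"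
    by auto
  moreover have "Measurable.pred M (\<lambda>x. F x p = G x p)" if "p \<in> D" for p
  proof -
    have p: "p \<in> closure D"
      using that closure_subset by blast
    show ?thesis
      unfolding pred_def
      by (rule measurable_equality_set)
        (auto intro: measurable_compose[OF F measurable_component_singleton[OF p]]
          measurable_compose[OF G measurable_component_singleton[OF p]])
  qed
  then have "Measurable.pred M (\<lambda>x. \<forall>p\<in>D. F x p = G x p)"
    by (rule pred_countable_Ball[OF assms(1)])
  ultimately show ?thesis
    by (simp add: pred_def)
qed

definition dyadic_floor :: "nat \<Rightarrow> real \<times> real \<Rightarrow> real \<times> real" where
  "dyadic_floor k x = (\<lfloor>fst x * 2^k\<rfloor> / 2^k, \<lfloor>snd x * 2^k\<rfloor> / 2^k)"

definition dyadic_simplex :: "real \<Rightarrow> (real \<times> real) set" where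
  "dyadic_simplex T = (\<Union>k. dyadic_floor k ` simplex2 T)"

lemma floor_pow2_tendsto: "(\<lambda>k. \<lfloor>y * 2^k\<rfloor> / 2^k) \<longlonglongrightarrow> (y::real)"
proof (rule tendsto_sandwich[of "\<lambda>k. y - 1 / 2^k" _ _ "\<lambda>k. y"])
  have "(y * 2^k - 1) / 2^k \<le> \<lfloor>y * 2^k\<rfloor> / 2^k" for k :: nat
    by (intro divide_right_mono) (linarith, simp)
  then show "\<forall>\<^sub>F k in sequentially. y - 1 / 2^k \<le> \<lfloor>y * 2^k\<rfloor> / 2^k"
    by (simp add: diff_divide_distrib)
  show "\<forall>\<^sub>F k in sequentially. \<lfloor>y * 2^k\<rfloor> / 2^k \<le> y"
    by (intro always_eventually allI) (simp add: divide_le_eq)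
  have "(\<lambda>k. y - inverse (2 ^ k)) \<longlonglongrightarrow> y - 0"
    by (intro tendsto_diff tendsto_const LIMSEQ_inverse_realpow_zero) simp
  then show "(\<lambda>k. y - 1 / 2^k) \<longlonglongrightarrow> y"
    by (simp add: divide_inverse)
qed simp

lemma dyadic_floor_tendsto: "(\<lambda>k. dyadic_floor k x) \<longlonglongrightarrow> x"
  unfolding dyadic_floor_def by (rule tendsto_Pair[of _ "fst x" _ _ "snd x", simplified] floor_pow2_tendsto)+

lemma dyadic_floor_in_simplex2:
  assumes "x \<in> simplex2 T"
  shows "dyadic_floor k x \<in> simplex2 T"
proof -
  obtain s t where x: "x = (s, t)" "0 \<le> s" "s \<le> t" "t \<le> T"
    using assms by (auto simp: simplex2_def)
  have "\<lfloor>t * 2^k\<rfloor> / 2^k \<le> t"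
    by (simp add: divide_le_eq)
  moreover have "\<lfloor>s * 2^k\<rfloor> \<le> \<lfloor>t * 2^k\<rfloor>"
    using x by (intro floor_mono) simp
  ultimately show ?thesis
    using x by (auto simp: simplex2_def dyadic_floor_def divide_right_mono)
qed

lemma closed_simplex2: "closed (simplex2 T)"
proof -
  have "simplex2 T = {x. 0 \<le> fst x} \<inter> {x. fst x \<le> snd x} \<inter> {x. snd x \<le> T}"
    by (auto simp: simplex2_def)
  then show ?thesis
    by (simp add: closed_Collect_le continuous_on_fst continuous_on_snd closed_Int continuous_on_const)
qed

lemma compact_simplex2: "compact (simplex2 T)"
proof -
  have "simplex2 T \<subseteq> cbox (0, 0) (T, T)"
    by (auto simp: simplex2_def cbox_Pair_iff)
  then show ?thesis
    using closed_simplex2 bounded_cbox bounded_subset compact_eq_bounded_closed by blast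
qed

lemma countable_dyadic_simplex: "countable (dyadic_simplex T)"
proof (rule countable_subset)
  have "dyadic_floor k x = (\<lambda>(a, b, k). (real_of_int a / 2^k, real_of_int b / 2^k)) (\<lfloor>fst x * 2^k\<rfloor>, \<lfloor>snd x * 2^k\<rfloor>, k)"
    for k x
    by (simp add: dyadic_floor_def)
  then show "dyadic_simplex T \<subseteq> range (\<lambda>(a, b, k). (real_of_int a / 2^k, real_of_int b / 2^k))"
    unfolding dyadic_simplex_def by blast
qed simp

lemma dyadic_simplex_subset: "dyadic_simplex T \<subseteq> simplex2 T"
  unfolding dyadic_simplex_def using dyadic_floor_in_simplex2 by blast

lemma closure_dyadic_simplex: "closure (dyadic_simplex T) = simplex2 T"
proof
  show "closure (dyadic_simplex T) \<subseteq> simplex2 T"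
    using dyadic_simplex_subset closed_simplex2 by (rule closure_minimal)
  show "simplex2 T \<subseteq> closure (dyadic_simplex T)"
  proof
    fix x assume "x \<in> simplex2 T"
    then show "x \<in> closure (dyadic_simplex T)"
      unfolding closure_sequential dyadic_simplex_def
      by (intro exI[of _ "\<lambda>k. dyadic_floor k x"]) (auto simp: dyadic_floor_tendsto)
  qed
qed

lemma dyadic_pt_in_interval:
  assumes "0 \<le> T" and "k \<le> 2^n"
  shows "dyadic_pt T n k \<in> {0..T}"
proof -
  have "real k \<le> 2^n"
    using assms(2) by (metis of_nat_le_iff of_nat_numeral of_nat_power)
  then show ?thesis
    using assms(1) unfolding dyadic_pt_def by (auto simp: field_simps intro: mult_left_mono)
qed

lemma dyadic_rs_integral_restrict:
  fixes g f :: "real \<Rightarrow> real^'m"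
  assumes "0 \<le> T"
  shows "dyadic_rs_integral T n (restrict g {0..T}) (restrict f {0..T}) = dyadic_rs_integral T n g f"
proof -
  have pts: "dyadic_pt T n k \<in> {0..T}" "dyadic_pt T n (Suc k) \<in> {0..T}" if "k < 2^n" for k
    using dyadic_pt_in_interval[OF assms] that by simp_all
  have "dyadic_interp T n (restrict h {0..T}) = dyadic_interp T n h"
    and "dyadic_interp_deriv T n (restrict h {0..T}) = dyadic_interp_deriv T n h" for h :: "real \<Rightarrow> real^'m"
    unfolding dyadic_interp_def dyadic_interp_deriv_def using pts by (auto intro!: ext sum.cong)
  then show ?thesis
    unfolding dyadic_rs_integral_def by simp
qed

lemma borel_measurable_outer[measurable (raw)]:
  assumes "f \<in> borel_measurable M" "g \<in> borel_measurable M"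
  shows "(\<lambda>x. outer (f x) (g x)) \<in> borel_measurable M"
proof (rule borel_measurable_continuous_Pair[OF assms])
  show "continuous_on UNIV (\<lambda>x. outer (fst x) (snd x))"
    unfolding outer_def by (intro continuous_on_vec_lambda continuous_intros)
qed

lemma norm_outer: "norm (outer a b) = norm a * norm b"
proof -
  have row: "outer a b $ i = a $ i *\<^sub>R b" for i
    by (simp add: outer_def vec_eq_iff)
  have "norm (outer a b) = L2_set (\<lambda>i. norm (outer a b $ i)) UNIV"
    by (simp add: norm_vec_def)
  also have "\<dots> = L2_set (\<lambda>i. norm b * norm (a $ i)) UNIV"
    by (simp only: row norm_scaleR real_norm_def mult.commute)
  also have "\<dots> = norm b * L2_set (\<lambda>i. norm (a $ i)) UNIV"
    by (simp only: L2_set_right_distrib norm_ge_zero)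
  also have "\<dots> = norm b * norm a"
    by (simp add: norm_vec_def)
  finally show ?thesis
    by simp
qed

lemma borel_measurable_dyadic_interp:
  assumes G: "\<And>y. (\<lambda>x. G x y) \<in> borel_measurable M" and [measurable]: "R \<in> borel_measurable M"
  shows "(\<lambda>x. dyadic_interp T n (G x) (R x)) \<in> borel_measurable M"
    and "(\<lambda>x. dyadic_interp_deriv T n (G x) (R x)) \<in> borel_measurable M"
  unfolding dyadic_interp_def dyadic_interp_deriv_def
  subgoal
    apply (intro borel_measurable_sum)
    subgoal for k using G[of "dyadic_pt T n k"] G[of "dyadic_pt T n (Suc k)"] by measurable
    done
  subgoal
    apply (intro borel_measurable_sum)
    subgoal for k using G[of "dyadic_pt T n k"] G[of "dyadic_pt T n (Suc k)"] by measurable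
    done
  done

lemma norm_dyadic_interp_le:
  "norm (dyadic_interp T n g r) \<le>
     (\<Sum>k<2^n. norm (g (dyadic_pt T n k)) + norm (g (dyadic_pt T n (Suc k)) - g (dyadic_pt T n k)))"
  unfolding dyadic_interp_def
proof (rule order_trans[OF norm_sum sum_mono])
  fix k
  define a b where "a = dyadic_pt T n k" and "b = dyadic_pt T n (Suc k)"
  define c where "c = 2^n * (r - a) / T"
  show "norm (indicator {a..<b} r *\<^sub>R (g a + c *\<^sub>R (g b - g a))) \<le> norm (g a) + norm (g b - g a)"
  proof (cases "r \<in> {a..<b}")
    case True
    have "b - a = T / 2^n"
      by (simp add: a_def b_def dyadic_pt_def field_simps)
    with True have "0 < T / 2^n" and "r - a \<le> T / 2^n"
      by auto
    then have "T > 0"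
      by (simp add: zero_less_divide_iff)
    with \<open>r - a \<le> T / 2^n\<close> have "\<bar>c\<bar> \<le> 1"
      using True by (simp add: c_def pos_le_divide_eq abs_le_iff mult.commute)
    then have "norm (c *\<^sub>R (g b - g a)) \<le> norm (g b - g a)"
      by (simp add: mult_left_le_one_le)
    then show ?thesis
      using True norm_triangle_ineq[of "g a" "c *\<^sub>R (g b - g a)"] by simp
  qed simp
qed

lemma norm_dyadic_interp_deriv_le:
  "norm (dyadic_interp_deriv T n g r) \<le>
     (\<Sum>k<2^n. norm ((2^n / T) *\<^sub>R (g (dyadic_pt T n (Suc k)) - g (dyadic_pt T n k))))"
  unfolding dyadic_interp_deriv_def
  by (rule order_trans[OF norm_sum sum_mono]) (simp add: indicator_def)

lemma integral_eq_lborel_integral_if_bounded: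
  fixes h :: "real \<Rightarrow> 'b::euclidean_space"
  assumes "h \<in> borel_measurable lborel" and "\<And>r. norm (h r) \<le> C"
  shows "integral {s..t} h = (\<integral>r. indicator {s..t} r *\<^sub>R h r \<partial>lborel)"
proof -
  have "set_integrable lborel {s..t} h"
    unfolding set_integrable_def
  proof (rule Bochner_Integration.integrable_bound)
    show "integrable lborel (\<lambda>r. C * indicator {s..t} r :: real)"
      by (rule borel_integrable_atLeastAtMost) auto
    show "(\<lambda>r. indicator {s..t} r *\<^sub>R h r) \<in> borel_measurable lborel"
      using assms(1) by measurable
    show "AE r in lborel. norm (indicator {s..t} r *\<^sub>R h r) \<le> norm (C * indicator {s..t} r)"
      using assms(2) order_trans[OF norm_ge_zero assms(2)] by (auto simp: indicator_def)
  qed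
  then show ?thesis
    using set_borel_integral_eq_integral(2) unfolding set_lebesgue_integral_def by metis
qed

lemma dyadic_rs_integral_eq_lborel_integral:
  "dyadic_rs_integral T n g f s t =
     (\<integral>r. indicator {s..t} r *\<^sub>R
        outer (dyadic_interp T n g r - dyadic_interp T n g s) (dyadic_interp_deriv T n f r) \<partial>lborel)"
  unfolding dyadic_rs_integral_def
proof (rule integral_eq_lborel_integral_if_bounded)
  define A where "A = (\<Sum>k<2^n. norm (g (dyadic_pt T n k)) + norm (g (dyadic_pt T n (Suc k)) - g (dyadic_pt T n k)))"
  define B where "B = (\<Sum>k<2^n. norm ((2^n / T) *\<^sub>R (f (dyadic_pt T n (Suc k)) - f (dyadic_pt T n k))))"
  fix r
  have "0 \<le> A"
    using order_trans[OF norm_ge_zero norm_dyadic_interp_le] unfolding A_def .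
  have "norm (dyadic_interp T n g r - dyadic_interp T n g s) \<le> A + A"
    using norm_dyadic_interp_le[of T n g] unfolding A_def
    by (intro order_trans[OF norm_triangle_ineq4] add_mono)
  moreover have "norm (dyadic_interp_deriv T n f r) \<le> B"
    unfolding B_def by (rule norm_dyadic_interp_deriv_le)
  ultimately show "norm (outer (dyadic_interp T n g r - dyadic_interp T n g s) (dyadic_interp_deriv T n f r))
      \<le> (A + A) * B"
    unfolding norm_outer using \<open>0 \<le> A\<close> by (intro mult_mono) auto
next
  have [measurable]: "dyadic_interp T n g \<in> borel_measurable lborel"
    "dyadic_interp_deriv T n f \<in> borel_measurable lborel"
    using borel_measurable_dyadic_interp[of "\<lambda>_. g" lborel "\<lambda>r. r" T n]
      borel_measurable_dyadic_interp[of "\<lambda>_. f" lborel "\<lambda>r. r" T n] by simp_all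
  show "(\<lambda>r. outer (dyadic_interp T n g r - dyadic_interp T n g s) (dyadic_interp_deriv T n f r))
      \<in> borel_measurable lborel"
    by measurable
qed

lemma borel_measurable_dyadic_rs_integral:
  assumes G: "\<And>y. (\<lambda>x. G x y) \<in> borel_measurable M" and F: "\<And>y. (\<lambda>x. F x y) \<in> borel_measurable M"
  shows "(\<lambda>x. dyadic_rs_integral T n (G x) (F x) s t) \<in> borel_measurable M"
  unfolding dyadic_rs_integral_eq_lborel_integral
proof (rule lborel.borel_measurable_lebesgue_integral)
  have G': "(\<lambda>z. G (fst z) y) \<in> borel_measurable (M \<Otimes>\<^sub>M lborel)"
    and F': "(\<lambda>z. F (fst z) y) \<in> borel_measurable (M \<Otimes>\<^sub>M lborel)" for y
    using measurable_compose[OF measurable_fst G] measurable_compose[OF measurable_fst F] by auto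
  have [measurable]: "(\<lambda>z. dyadic_interp T n (G (fst z)) (snd z)) \<in> borel_measurable (M \<Otimes>\<^sub>M lborel)"
    "(\<lambda>z. dyadic_interp T n (G (fst z)) s) \<in> borel_measurable (M \<Otimes>\<^sub>M lborel)"
    "(\<lambda>z. dyadic_interp_deriv T n (F (fst z)) (snd z)) \<in> borel_measurable (M \<Otimes>\<^sub>M lborel)"
    by (intro borel_measurable_dyadic_interp G' F'; measurable)+
  show "(\<lambda>(x, r). indicator {s..t} r *\<^sub>R outer (dyadic_interp T n (G x) r - dyadic_interp T n (G x) s)
      (dyadic_interp_deriv T n (F x) r)) \<in> borel_measurable (M \<Otimes>\<^sub>M lborel)"
    unfolding case_prod_beta by measurable
qed

lemma continuous_on_restrict_iff: "continuous_on S (restrict f S) \<longleftrightarrow> continuous_on S f"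
  by (rule continuous_on_cong) auto

lemma measurable_restrict_continuous:
  assumes meas: "(\<lambda>x. restrict (F x) S) \<in> M \<rightarrow>\<^sub>M Pi\<^sub>M S (\<lambda>_. borel)"
    and cont: "\<And>x. x \<in> space M \<Longrightarrow> continuous_on S (F x)"
  shows "(\<lambda>x. restrict (F x) S) \<in> M \<rightarrow>\<^sub>M restrict_space (Pi\<^sub>M S (\<lambda>_. borel)) {f. continuous_on S f}"
proof (rule measurable_restrict_space2[OF _ meas])
  have "continuous_on S (restrict (F x) S)" if "x \<in> space M" for x
    unfolding continuous_on_restrict_iff using cont[OF that] .
  then show "(\<lambda>x. restrict (F x) S) \<in> space M \<rightarrow> {f. continuous_on S f}"
    by blast
qed

lemma sets_Collect_eq_csimplex_paths:
  assumes A: "A \<in> M \<rightarrow>\<^sub>M csimplex_paths T" and B: "B \<in> M \<rightarrow>\<^sub>M csimplex_paths T"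
  shows "{x \<in> space M. A x = B x} \<in> sets M"
proof (rule sets_Collect_eq_on_closure[OF countable_dyadic_simplex], unfold closure_dyadic_simplex)
  show "A \<in> M \<rightarrow>\<^sub>M Pi\<^sub>M (simplex2 T) (\<lambda>_. borel)" "B \<in> M \<rightarrow>\<^sub>M Pi\<^sub>M (simplex2 T) (\<lambda>_. borel)"
    using A B unfolding csimplex_paths_def measurable_restrict_space2_iff by blast+
  show "continuous_on (simplex2 T) (A x) \<and> continuous_on (simplex2 T) (B x)" if "x \<in> space M" for x
    using measurable_space[OF A that] measurable_space[OF B that]
    by (simp add: csimplex_paths_def space_restrict_space)
qed

lemma borel_measurable_cpaths_eval: "(\<lambda>g :: real \<Rightarrow> real^'m. g y) \<in> borel_measurable (cpaths T)"
proof (cases "y \<in> {0..T}")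
  case True
  then show ?thesis
    unfolding cpaths_def by (intro measurable_restrict_space1 measurable_component_singleton)
next
  case False
  have undef: "g y = undefined" if "g \<in> space (cpaths T)" for g :: "real \<Rightarrow> real^'m"
  proof -
    have "g \<in> (\<Pi>\<^sub>E t\<in>{0..T}. UNIV)"
      using that by (simp add: cpaths_def space_restrict_space space_PiM)
    then show ?thesis
      using False by (rule PiE_arb)
  qed
  then have "(\<lambda>g :: real \<Rightarrow> real^'m. g y) \<in> borel_measurable (cpaths T) \<longleftrightarrow>
      (\<lambda>_ :: real \<Rightarrow> real^'m. undefined :: real^'m) \<in> borel_measurable (cpaths T)"
    by (rule measurable_cong)
  then show ?thesis
    by simp
qed

definition dyadic_rs_limit ::
  "real \<Rightarrow> (real \<Rightarrow> real^'m) \<times> (real \<Rightarrow> real^'m) \<Rightarrow> real \<times> real \<Rightarrow> real^'m^'m" where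
  "dyadic_rs_limit T \<omega> p = lim (\<lambda>n. dyadic_rs_integral T n (fst \<omega>) (snd \<omega>) (fst p) (snd p))"

definition cross_integral_map ::
  "real \<Rightarrow> (real \<Rightarrow> real^'m) \<times> (real \<Rightarrow> real^'m) \<Rightarrow> real \<times> real \<Rightarrow> real^'m^'m" where
  "cross_integral_map T \<omega> = restrict (dense_extension (dyadic_simplex T) (dyadic_rs_limit T \<omega>)) (simplex2 T)"

lemma borel_measurable_dyadic_rs_limit:
  "(\<lambda>\<omega>. dyadic_rs_limit T \<omega> p) \<in> borel_measurable (cpaths T \<Otimes>\<^sub>M cpaths T)"
  unfolding dyadic_rs_limit_def
  using measurable_compose[OF measurable_fst borel_measurable_cpaths_eval]
    measurable_compose[OF measurable_snd borel_measurable_cpaths_eval]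
  by (intro borel_measurable_lim_metric borel_measurable_dyadic_rs_integral)

lemma continuous_on_cross_integral_map: "continuous_on (simplex2 T) (cross_integral_map T \<omega>)"
  unfolding cross_integral_map_def continuous_on_restrict_iff
  using continuous_on_dense_extension[of "dyadic_simplex T"] by (simp add: closure_dyadic_simplex)

lemma measurable_cross_integral_map:
  "cross_integral_map T \<in> cpaths T \<Otimes>\<^sub>M cpaths T \<rightarrow>\<^sub>M csimplex_paths T"
  unfolding csimplex_paths_def
proof (rule measurable_restrict_space2)
  show "cross_integral_map T \<in> space (cpaths T \<Otimes>\<^sub>M cpaths T) \<rightarrow> {f. continuous_on (simplex2 T) f}"
    using continuous_on_cross_integral_map by blast
  show "cross_integral_map T \<in> cpaths T \<Otimes>\<^sub>M cpaths T \<rightarrow>\<^sub>M Pi\<^sub>M (simplex2 T) (\<lambda>_. borel)"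
    unfolding cross_integral_map_def
    by (intro measurable_restrict borel_measurable_dense_extension countable_dyadic_simplex
        borel_measurable_dyadic_rs_limit) (simp add: closure_dyadic_simplex)
qed

lemma cross_integral_map_eq:
  assumes "continuous_on (simplex2 T) A"
    and "\<And>s t. (s, t) \<in> simplex2 T \<Longrightarrow> (\<lambda>n. dyadic_rs_integral T n g f s t) \<longlonglongrightarrow> A (s, t)"
  shows "cross_integral_map T (g, f) = restrict A (simplex2 T)"
proof
  fix x
  have "dyadic_rs_limit T (g, f) p = A p" if "p \<in> dyadic_simplex T" for p
  proof -
    obtain s t where p: "p = (s, t)"
      by force
    with that have "(s, t) \<in> simplex2 T"
      using dyadic_simplex_subset by blast
    then show ?thesis
      unfolding p dyadic_rs_limit_def using assms(2) by (simp add: limI)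
  qed
  then have "dense_extension (dyadic_simplex T) (dyadic_rs_limit T (g, f)) x = A x" if "x \<in> simplex2 T"
    using assms(1) compact_simplex2 that unfolding closure_dyadic_simplex[symmetric]
    by (intro dense_extension_eq_compact)
  then show "cross_integral_map T (g, f) x = restrict A (simplex2 T) x"
    by (simp add: cross_integral_map_def)
qed

theorem proposition17:
  fixes Q :: "'xi measure" and T q :: real
    and W :: "nat \<Rightarrow> 'xi \<Rightarrow> real \<Rightarrow> real^'m"
    and WW :: "nat \<Rightarrow> nat \<Rightarrow> 'xi \<Rightarrow> real \<Rightarrow> real \<Rightarrow> real^'m^'m"
  assumes Q: "prob_space Q" and T: "T > 0" and q: "q \<ge> 1"
    and meas_W: "\<And>i. i \<in> {1,2} \<Longrightarrow>
        (\<lambda>\<xi>. restrict (W i \<xi>) {0..T}) \<in> Q \<rightarrow>\<^sub>M Pi\<^sub>M {0..T} (\<lambda>_. borel)"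
    and cont_W: "\<And>i \<xi>. i \<in> {1,2} \<Longrightarrow> \<xi> \<in> space Q \<Longrightarrow> continuous_on {0..T} (W i \<xi>)"
    and meas_WW: "\<And>i j. i \<in> {1,2} \<Longrightarrow> j \<in> {1,2} \<Longrightarrow>
        (\<lambda>\<xi>. restrict (case_prod (WW i j \<xi>)) (simplex2 T)) \<in> Q \<rightarrow>\<^sub>M Pi\<^sub>M (simplex2 T) (\<lambda>_. borel)"
    and cont_WW: "\<And>i j \<xi>. i \<in> {1,2} \<Longrightarrow> j \<in> {1,2} \<Longrightarrow> \<xi> \<in> space Q \<Longrightarrow>
        continuous_on (simplex2 T) (case_prod (WW i j \<xi>))"
    and indep: "prob_space.indep_var Q
        (Pi\<^sub>M {0..T} (\<lambda>_. borel)) (\<lambda>\<xi>. restrict (W 1 \<xi>) {0..T})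
        (Pi\<^sub>M {0..T} (\<lambda>_. borel)) (\<lambda>\<xi>. restrict (W 2 \<xi>) {0..T})"
    and ident: "distr Q (Pi\<^sub>M {0..T} (\<lambda>_. borel)) (\<lambda>\<xi>. restrict (W 1 \<xi>) {0..T})
              = distr Q (Pi\<^sub>M {0..T} (\<lambda>_. borel)) (\<lambda>\<xi>. restrict (W 2 \<xi>) {0..T})"
    and mom_W: "(\<integral>\<^sup>+\<xi>. (SUP t\<in>{0..T}. ennreal (norm (W 1 \<xi> t) powr q)) \<partial>Q) < \<infinity>"
    and mom_WW: "\<And>i j. i \<in> {1,2} \<Longrightarrow> j \<in> {1,2} \<Longrightarrow>
        (\<integral>\<^sup>+\<xi>. (SUP st\<in>simplex2 T. ennreal (norm (case_prod (WW i j \<xi>) st) powr q)) \<partial>Q) < \<infinity>"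
    and indep2: "prob_space.indep_set Q
        (events_gen Q (Pi\<^sub>M {0..T} (\<lambda>_. borel) \<Otimes>\<^sub>M Pi\<^sub>M (simplex2 T) (\<lambda>_. borel))
          (\<lambda>\<xi>. (restrict (W 1 \<xi>) {0..T}, restrict (case_prod (WW 1 1 \<xi>)) (simplex2 T))))
        (events_gen Q (Pi\<^sub>M {0..T} (\<lambda>_. borel)) (\<lambda>\<xi>. restrict (W 2 \<xi>) {0..T}))"
    and chen: "AE \<xi> in Q. \<forall>i\<in>{1,2}. \<forall>j\<in>{1,2}. \<forall>r s t.
        0 \<le> r \<and> r \<le> s \<and> s \<le> t \<and> t \<le> T \<longrightarrow>
        WW i j \<xi> r t = WW i j \<xi> r s + WW i j \<xi> s t
                       + outer (W i \<xi> s - W i \<xi> r) (W j \<xi> t - W j \<xi> s)"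
    and approx: "AE \<xi> in Q. \<forall>(s,t)\<in>simplex2 T.
        (\<lambda>n. dyadic_rs_integral T n (W 2 \<xi>) (W 1 \<xi>) s t) \<longlonglongrightarrow> WW 2 1 \<xi> s t"
  shows "\<exists>I. I \<in> cpaths T \<Otimes>\<^sub>M cpaths T \<rightarrow>\<^sub>M csimplex_paths T \<and>
    measure Q {\<xi> \<in> space Q. restrict (case_prod (WW 2 1 \<xi>)) (simplex2 T)
                 = I (restrict (W 2 \<xi>) {0..T}, restrict (W 1 \<xi>) {0..T})} = 1"
proof -
  define X where "X \<xi> = (restrict (W 2 \<xi>) {0..T}, restrict (W 1 \<xi>) {0..T})" for \<xi>
  define A where "A \<xi> = restrict (case_prod (WW 2 1 \<xi>)) (simplex2 T)" for \<xi>
  have "X \<in> Q \<rightarrow>\<^sub>M cpaths T \<Otimes>\<^sub>M cpaths T"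
    unfolding X_def cpaths_def using meas_W cont_W
    by (intro measurable_Pair measurable_restrict_continuous) simp_all
  then have I: "(\<lambda>\<xi>. cross_integral_map T (X \<xi>)) \<in> Q \<rightarrow>\<^sub>M csimplex_paths T"
    by (rule measurable_compose[OF _ measurable_cross_integral_map])
  have "A \<in> Q \<rightarrow>\<^sub>M csimplex_paths T"
    unfolding A_def csimplex_paths_def using meas_WW cont_WW
    by (intro measurable_restrict_continuous) simp_all
  then have "{\<xi> \<in> space Q. A \<xi> = cross_integral_map T (X \<xi>)} \<in> sets Q"
    using I by (rule sets_Collect_eq_csimplex_paths)
  moreover have "AE \<xi> in Q. A \<xi> = cross_integral_map T (X \<xi>)"
    using approx AE_space
  proof eventually_elim
    case (elim \<xi>)
    then show ?case
      unfolding X_def A_def using cont_WW[of 2 1 \<xi>] T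
      by (intro cross_integral_map_eq[symmetric]) (auto simp: dyadic_rs_integral_restrict)
  qed
  ultimately have "measure Q {\<xi> \<in> space Q. A \<xi> = cross_integral_map T (X \<xi>)} = 1"
    by (simp add: prob_space.prob_Collect_eq_1[OF Q])
  then show ?thesis
    using measurable_cross_integral_map unfolding X_def A_def by blast
qed

end
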